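(* Let $I$ be a finite set and let $\{g_i: i\in I\}$ be an independent set of elements of a free group $F_n$, i.e. the $g_i$ are pairwise distinct and form a free basis of the subgroup $G=\langle g_i: i\in I\rangle$. For each $i\in I$ let $G_i=\langle g_j: j\in I\setminus\{i\}\rangle$. Then the coset incidence system $\Gamma(G;(G_i)_{i\in I})$ is flag-transitive, i.e. $G$ acting by right multiplication is transitive on the set of flags of type $J$ for every $J\subseteq I$.
   Context: An incidence system is a quadruple $(X,*,t,I)$ with $X$ a set, $I$ a finite type set, $t:X\to I$ surjective, and $*$ a symmetric relation with no two elements of the same type incident. A flag is a set of pairwise incident elements; its type is the set of types of its elements. Coset incidence system: given a group $G$ and subgroups $(G_i)_{i\in I}$, $\Gamma(G;(G_i)_{i\in I})$ has as elements all right cosets $G_ig$ ($g\in G$, $i\in I$), with $t(G_ig)=i$, and $G_ig_1 * G_jg_2$ iff $G_ig_1\cap G_jg_2\neq\emptyset$ (for cosets of different types). $G$ acts on it by right multiplication, preserving types and incidence. *)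

theory Defs
  imports "HOL-Algebra.Algebra"
begin

text \<open>Words over an index set: a letter (True,i) stands for x i, (False,i) for its inverse.\<close>
fun word_eval :: "('a,'b) monoid_scheme \<Rightarrow> ('i \<Rightarrow> 'a) \<Rightarrow> (bool \<times> 'i) list \<Rightarrow> 'a" where
  "word_eval G x [] = \<one>\<^bsub>G\<^esub>"
| "word_eval G x ((b,i)#w) =
     (if b then x i else inv\<^bsub>G\<^esub> (x i)) \<otimes>\<^bsub>G\<^esub> word_eval G x w"

fun reduced_word :: "(bool \<times> 'i) list \<Rightarrow> bool" where
  "reduced_word ((b,i)#(c,j)#w) = ((\<not> (i = j \<and> b \<noteq> c)) \<and> reduced_word ((c,j)#w))"
| "reduced_word _ = True"

definition independent_family :: "('a,'b) monoid_scheme \<Rightarrow> ('i \<Rightarrow> 'a) \<Rightarrow> 'i set \<Rightarrow> bool" where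
  "independent_family G x I \<longleftrightarrow> x ` I \<subseteq> carrier G \<and>
     (\<forall>w. set (map snd w) \<subseteq> I \<longrightarrow> reduced_word w \<longrightarrow> w \<noteq> [] \<longrightarrow> word_eval G x w \<noteq> \<one>\<^bsub>G\<^esub>)"

text \<open>F is (isomorphic to) the free group F_n: it has a free basis of n distinct elements.\<close>
definition free_group_of_rank :: "('a,'b) monoid_scheme \<Rightarrow> nat \<Rightarrow> bool" where
  "free_group_of_rank F n \<longleftrightarrow> group F \<and>
     (\<exists>x. independent_family F x {..<n} \<and> inj_on x {..<n} \<and> generate F (x ` {..<n}) = carrier F)"

text \<open>Coset incidence system Gamma(G; (H i)_{i in I}); an element is a pair (type, right coset).\<close>
definition coset_elements :: "('a,'b) monoid_scheme \<Rightarrow> ('i \<Rightarrow> 'a set) \<Rightarrow> 'i set \<Rightarrow> ('i \<times> 'a set) set" where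
  "coset_elements G H I = {(i, H i #>\<^bsub>G\<^esub> a) | i a. i \<in> I \<and> a \<in> carrier G}"

definition coset_incident :: "('i \<times> 'a set) \<Rightarrow> ('i \<times> 'a set) \<Rightarrow> bool" where
  "coset_incident x y \<longleftrightarrow> fst x \<noteq> fst y \<and> snd x \<inter> snd y \<noteq> {}"

definition coset_flag :: "('a,'b) monoid_scheme \<Rightarrow> ('i \<Rightarrow> 'a set) \<Rightarrow> 'i set \<Rightarrow> ('i \<times> 'a set) set \<Rightarrow> bool" where
  "coset_flag G H I Fl \<longleftrightarrow> Fl \<subseteq> coset_elements G H I \<and>
     (\<forall>x\<in>Fl. \<forall>y\<in>Fl. x \<noteq> y \<longrightarrow> coset_incident x y)"

definition flag_type :: "('i \<times> 'a set) set \<Rightarrow> 'i set" where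
  "flag_type Fl = fst ` Fl"

definition right_act :: "('a,'b) monoid_scheme \<Rightarrow> 'a \<Rightarrow> ('i \<times> 'a set) \<Rightarrow> ('i \<times> 'a set)" where
  "right_act G a x = (fst x, snd x #>\<^bsub>G\<^esub> a)"

definition flag_transitive :: "('a,'b) monoid_scheme \<Rightarrow> ('i \<Rightarrow> 'a set) \<Rightarrow> 'i set \<Rightarrow> bool" where
  "flag_transitive G H I \<longleftrightarrow>
     (\<forall>J \<subseteq> I. \<forall>F1 F2. coset_flag G H I F1 \<and> flag_type F1 = J \<and>
                     coset_flag G H I F2 \<and> flag_type F2 = J \<longrightarrow>
                     (\<exists>a \<in> carrier G. right_act G a ` F1 = F2))"

end

theory Submission
  imports Defs
begin

text \<open>Every element of the subgroup generated by an independent family is the value of a unique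
  reduced word. Deleting from such a word its longest prefix avoiding the index i does not change
  its right coset modulo G_i, so every such coset is G_i v for a reduced word v that is empty or
  starts with a letter of index i, and its elements are the values of the reduced words p v with
  p avoiding i. If G_i v and G_k w meet and v is not longer than w, uniqueness of reduced words
  applied to a common element p v = q w gives w = u v with u a suffix of p, so w lies in G_i v.
  Hence the value of the longest of these representatives in a finite flag lies in every coset of
  the flag. A flag through a common element b is {G_i b : i in J}, and right multiplication by
  b^-1 b' maps it to the flag of the same type through b'.\<close>

section \<open>Reduced words\<close>

abbreviation letters :: "(bool \<times> 'i) list \<Rightarrow> 'i set" where
  "letters w \<equiv> snd ` set w"

fun cancel_cons :: "bool \<times> 'i \<Rightarrow> (bool \<times> 'i) list \<Rightarrow> (bool \<times> 'i) list" where
  "cancel_cons (b, i) ((c, j) # w) = (if i = j \<and> b \<noteq> c then w else (b, i) # (c, j) # w)"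
| "cancel_cons x [] = [x]"

definition reduce :: "(bool \<times> 'i) list \<Rightarrow> (bool \<times> 'i) list" where
  "reduce w = foldr cancel_cons w []"

definition inv_word :: "(bool \<times> 'i) list \<Rightarrow> (bool \<times> 'i) list" where
  "inv_word w = rev (map (\<lambda>(b, i). (\<not> b, i)) w)"

lemma reduced_word_ConsD: "reduced_word (x # w) \<Longrightarrow> reduced_word w"
  by (cases x; cases w) auto

lemma reduced_word_append:
  "reduced_word (xs @ ys) \<longleftrightarrow> reduced_word xs \<and> reduced_word ys \<and>
     (xs \<noteq> [] \<longrightarrow> ys \<noteq> [] \<longrightarrow> \<not> (snd (last xs) = snd (hd ys) \<and> fst (last xs) \<noteq> fst (hd ys)))"
proof (induction xs)
  case Nil
  then show ?case by simp
next
  case (Cons x xs)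
  show ?case
  proof (cases xs)
    case Nil
    then show ?thesis by (cases x; cases ys) auto
  next
    case (Cons y zs)
    then show ?thesis using Cons.IH by (cases x; cases y) auto
  qed
qed

lemma reduced_word_cancel_cons:
  assumes "reduced_word w"
  shows "reduced_word (cancel_cons x w)"
proof (cases w)
  case (Cons y w')
  then show ?thesis using assms by (cases x; cases y) (auto dest: reduced_word_ConsD)
qed simp

lemma letters_cancel_cons: "letters (cancel_cons x w) \<subseteq> insert (snd x) (letters w)"
  by (cases x; cases w) (auto split: if_splits)

lemma reduced_word_reduce: "reduced_word (reduce w)"
  by (induction w) (simp_all add: reduce_def reduced_word_cancel_cons)

lemma letters_reduce: "letters (reduce w) \<subseteq> letters w"
proof (induction w)
  case (Cons x w)
  have "letters (reduce (x # w)) \<subseteq> insert (snd x) (letters (reduce w))"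
    using letters_cancel_cons[of x "reduce w"] by (simp add: reduce_def)
  with Cons.IH show ?case by (simp; blast)
qed (simp add: reduce_def)

lemma inv_word_Cons: "inv_word ((b, i) # w) = inv_word w @ [(\<not> b, i)]"
  by (simp add: inv_word_def)

lemma letters_inv_word [simp]: "letters (inv_word w) = letters w"
  by (induction w) (auto simp: inv_word_def)

lemma reduced_word_inv_word: "reduced_word w \<Longrightarrow> reduced_word (inv_word w)"
proof (induction w)
  case Nil
  then show ?case by (simp add: inv_word_def)
next
  case (Cons x w)
  obtain b i where x: "x = (b, i)" by fastforce
  show ?case
  proof (cases w)
    case Nil
    then show ?thesis by (simp add: inv_word_def)
  next
    case (Cons y w')
    obtain c j where y: "y = (c, j)" by fastforce
    have "last (inv_word w) = (\<not> c, j)" "inv_word w \<noteq> []"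
      using Cons y by (simp_all add: inv_word_def)
    moreover have "reduced_word (inv_word w)" "\<not> (i = j \<and> b \<noteq> c)"
      using Cons.IH Cons.prems Cons x y by (auto dest: reduced_word_ConsD)
    ultimately show ?thesis
      by (simp add: x inv_word_Cons reduced_word_append)
  qed
qed

section \<open>Flags of coset incidence systems\<close>

lemma finite_coset_flag:
  assumes "finite I" and "coset_flag G H I Fl"
  shows "finite Fl"
proof -
  have "inj_on fst Fl" "fst ` Fl \<subseteq> I"
    using assms(2) by (auto simp: inj_on_def coset_flag_def coset_incident_def coset_elements_def)
  then show ?thesis
    using assms(1) finite_imageD finite_subset by metis
qed

lemma (in group) coset_flag_eq_cosets_of_common_element:
  assumes subgroups: "\<And>i. i \<in> I \<Longrightarrow> subgroup (H i) G"
    and flag: "coset_flag G H I Fl" and common: "\<forall>x\<in>Fl. b \<in> snd x"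
  shows "Fl = (\<lambda>i. (i, H i #> b)) ` flag_type Fl"
proof -
  have x_eq: "x = (fst x, H (fst x) #> b)" if "x \<in> Fl" for x
  proof -
    have "x \<in> coset_elements G H I"
      using flag that by (auto simp: coset_flag_def)
    then obtain i a where x: "x = (i, H i #> a)" "i \<in> I" "a \<in> carrier G"
      by (auto simp: coset_elements_def)
    have "b \<in> H i #> a"
      using common that x(1) by fastforce
    then have "H i #> a = H i #> b"
      using repr_independence x(2,3) subgroups by blast
    then show ?thesis
      using x(1) by simp
  qed
  have "(\<lambda>x. (fst x, H (fst x) #> b)) ` Fl = (\<lambda>x. x) ` Fl"
    by (rule image_cong) (simp_all add: x_eq[symmetric])
  then show ?thesis
    by (simp add: flag_type_def image_image)
qed

lemma (in group) flag_transitive_if_flags_meet: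
  assumes subgroups: "\<And>i. i \<in> I \<Longrightarrow> subgroup (H i) G"
    and meet: "\<And>Fl. coset_flag G H I Fl \<Longrightarrow> \<exists>b\<in>carrier G. \<forall>x\<in>Fl. b \<in> snd x"
  shows "flag_transitive G H I"
  unfolding flag_transitive_def
proof (intro allI impI)
  fix J F1 F2
  assume flags: "coset_flag G H I F1 \<and> flag_type F1 = J \<and> coset_flag G H I F2 \<and> flag_type F2 = J"
  obtain b1 b2 where b: "b1 \<in> carrier G" "\<forall>x\<in>F1. b1 \<in> snd x" "b2 \<in> carrier G" "\<forall>x\<in>F2. b2 \<in> snd x"
    using meet flags by meson
  have types: "flag_type F1 = J" "flag_type F2 = J"
    using flags by simp_all
  have "F1 = (\<lambda>i. (i, H i #> b1)) ` flag_type F1"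
    by (rule coset_flag_eq_cosets_of_common_element[of I H]) (use subgroups flags b in auto)
  moreover have "F2 = (\<lambda>i. (i, H i #> b2)) ` flag_type F2"
    by (rule coset_flag_eq_cosets_of_common_element[of I H]) (use subgroups flags b in auto)
  ultimately have F: "F1 = (\<lambda>i. (i, H i #> b1)) ` J" "F2 = (\<lambda>i. (i, H i #> b2)) ` J"
    unfolding types .
  have "J \<subseteq> I"
    using flags by (auto simp: flag_type_def coset_flag_def coset_elements_def)
  have "right_act G (inv b1 \<otimes> b2) (i, H i #> b1) = (i, H i #> b2)" if "i \<in> J" for i
  proof -
    have "H i \<subseteq> carrier G"
      using subgroups \<open>J \<subseteq> I\<close> that subgroup.subset by blast
    then have "(H i #> b1) #> (inv b1 \<otimes> b2) = H i #> (b1 \<otimes> (inv b1 \<otimes> b2))"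
      using b by (simp add: coset_mult_assoc)
    then show ?thesis
      using b by (simp add: right_act_def m_assoc[symmetric])
  qed
  then show "\<exists>a\<in>carrier G. right_act G a ` F1 = F2"
    using b F by (intro bexI[of _ "inv b1 \<otimes> b2"]) (auto simp: image_image)
qed

section \<open>Words in a family of group elements\<close>

locale generator_family = group G for G (structure) +
  fixes g :: "'i \<Rightarrow> 'a" and I :: "'i set"
  assumes generators_closed: "g ` I \<subseteq> carrier G"
begin

abbreviation G_without :: "'i \<Rightarrow> 'a set" where
  "G_without i \<equiv> generate G (g ` (I - {i}))"

lemma subgroup_generate: "K \<subseteq> I \<Longrightarrow> subgroup (generate G (g ` K)) G"
  using generators_closed by (intro generate_is_subgroup) auto

lemma subgroup_G_without: "subgroup (G_without i) G"
  by (rule subgroup_generate) auto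

lemma word_eval_closed: "letters w \<subseteq> I \<Longrightarrow> word_eval G g w \<in> carrier G"
  by (induction w) (use generators_closed in auto)

lemma word_eval_append:
  "letters xs \<subseteq> I \<Longrightarrow> letters ys \<subseteq> I \<Longrightarrow>
     word_eval G g (xs @ ys) = word_eval G g xs \<otimes> word_eval G g ys"
  by (induction xs) (use generators_closed word_eval_closed in \<open>auto simp: m_assoc\<close>)

lemma word_eval_cancel_cons:
  assumes "snd x \<in> I" "letters w \<subseteq> I"
  shows "word_eval G g (cancel_cons x w) = word_eval G g (x # w)"
proof (cases w)
  case (Cons y w')
  then show ?thesis
    using assms generators_closed word_eval_closed[of w']
    by (cases x; cases y) (auto simp: m_assoc[symmetric])
qed simp

lemma word_eval_reduce: "letters w \<subseteq> I \<Longrightarrow> word_eval G g (reduce w) = word_eval G g w"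
proof (induction w)
  case (Cons x w)
  have "letters (reduce w) \<subseteq> I"
    using Cons.prems letters_reduce[of w] by auto
  then show ?case
    using Cons word_eval_cancel_cons[of x "reduce w"] by (cases x) (simp add: reduce_def)
qed (simp add: reduce_def)

lemma word_eval_inv_word:
  "letters w \<subseteq> I \<Longrightarrow> word_eval G g (inv_word w) = inv (word_eval G g w)"
proof (induction w)
  case (Cons x w)
  obtain b i where x: "x = (b, i)" by fastforce
  have "g i \<in> carrier G" "letters (inv_word w) \<subseteq> I"
    using Cons.prems generators_closed x by auto
  then show ?case
    using Cons word_eval_append[of "inv_word w" "[(\<not> b, i)]"] word_eval_closed[of w]
    by (auto simp: x inv_word_Cons inv_mult_group)
qed (simp add: inv_word_def)

lemma word_eval_in_generate:
  assumes "K \<subseteq> I" "letters w \<subseteq> K"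
  shows "word_eval G g w \<in> generate G (g ` K)"
  using assms(2)
proof (induction w)
  case (Cons x w)
  obtain b i where x: "x = (b, i)" by fastforce
  have S: "subgroup (generate G (g ` K)) G"
    using subgroup_generate[OF assms(1)] .
  have "g i \<in> generate G (g ` K)"
    using Cons.prems x by (intro generate.incl) auto
  then have "(if b then g i else inv (g i)) \<in> generate G (g ` K)"
    using subgroup.m_inv_closed[OF S] by simp
  then show ?case
    using Cons subgroup.m_closed[OF S] by (simp add: x)
qed (simp add: generate.one)

lemma generate_word:
  assumes "K \<subseteq> I" "x \<in> generate G (g ` K)"
  obtains w where "letters w \<subseteq> K" "x = word_eval G g w"
proof -
  have "\<exists>w. letters w \<subseteq> K \<and> x = word_eval G g w"
    using assms(2)
  proof (induction x rule: generate.induct)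
    case one
    show ?case
      by (intro exI[of _ "[]"]) simp
  next
    case (incl h)
    then obtain i where "i \<in> K" "h = g i" by auto
    then show ?case
      using generators_closed assms(1) by (intro exI[of _ "[(True, i)]"]) (auto simp: subset_iff)
  next
    case (inv h)
    then obtain i where "i \<in> K" "h = g i" by auto
    then show ?case
      using generators_closed assms(1) by (intro exI[of _ "[(False, i)]"]) (auto simp: subset_iff)
  next
    case (eng h1 h2)
    then obtain w1 w2 where "letters w1 \<subseteq> K" "h1 = word_eval G g w1"
      "letters w2 \<subseteq> K" "h2 = word_eval G g w2" by blast
    then show ?case
      using assms(1) word_eval_append[of w1 w2] by (intro exI[of _ "w1 @ w2"]) auto
  qed
  then show thesis
    using that by blast
qed

lemma generate_reduced_word:
  assumes "K \<subseteq> I" "x \<in> generate G (g ` K)"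
  obtains w where "reduced_word w" "letters w \<subseteq> K" "x = word_eval G g w"
proof -
  obtain w where w: "letters w \<subseteq> K" "x = word_eval G g w"
    using generate_word[OF assms] .
  then have "letters (reduce w) \<subseteq> K" "x = word_eval G g (reduce w)"
    using letters_reduce[of w] word_eval_reduce[of w] assms(1) by auto
  then show thesis
    using that reduced_word_reduce by blast
qed

definition coset_normal_word :: "'i \<Rightarrow> (bool \<times> 'i) list \<Rightarrow> bool" where
  "coset_normal_word i v \<longleftrightarrow> reduced_word v \<and> letters v \<subseteq> I \<and> (v \<noteq> [] \<longrightarrow> snd (hd v) = i)"

lemma coset_normal_word_exists:
  assumes "a \<in> generate G (g ` I)"
  obtains v where "coset_normal_word i v" "G_without i #> a = G_without i #> word_eval G g v"
proof -
  obtain w where w: "reduced_word w" "letters w \<subseteq> I" "a = word_eval G g w"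
    using generate_reduced_word[OF subset_refl assms] .
  define u where "u = takeWhile (\<lambda>l. snd l \<noteq> i) w"
  define v where "v = dropWhile (\<lambda>l. snd l \<noteq> i) w"
  have w_eq: "w = u @ v"
    by (simp add: u_def v_def)
  have u: "letters u \<subseteq> I - {i}"
    using w(2) by (auto simp: u_def dest: set_takeWhileD)
  have v: "letters v \<subseteq> I" "reduced_word v"
    using w(1,2) by (auto simp: w_eq reduced_word_append)
  have "v \<noteq> [] \<Longrightarrow> snd (hd v) = i"
    using hd_dropWhile[of "\<lambda>l. snd l \<noteq> i" w] by (simp add: v_def)
  with v have normal: "coset_normal_word i v"
    by (simp add: coset_normal_word_def)
  have "letters u \<subseteq> I"
    using u by blast
  have "G_without i #> word_eval G g u = G_without i"
    using u \<open>letters u \<subseteq> I\<close>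
    by (intro coset_join2 word_eval_closed subgroup_G_without word_eval_in_generate) auto
  then have "G_without i #> a = G_without i #> word_eval G g v"
    using \<open>letters u \<subseteq> I\<close> v subgroup.subset[OF subgroup_G_without]
    by (simp add: w(3) w_eq word_eval_append coset_mult_assoc[symmetric] word_eval_closed)
  with normal show thesis
    using that by blast
qed

lemma coset_element_normal_word:
  assumes "x \<in> coset_elements (G\<lparr>carrier := generate G (g ` I)\<rparr>) G_without I"
  obtains v where "coset_normal_word (fst x) v" "snd x = G_without (fst x) #> word_eval G g v"
proof -
  obtain i a where "x = (i, G_without i #> a)" "a \<in> generate G (g ` I)"
    using assms by (auto simp: coset_elements_def)
  then show thesis
    using that coset_normal_word_exists by (metis fst_conv snd_conv)
qed

lemma mem_coset_normal_word:
  assumes v: "coset_normal_word i v" and y: "y \<in> G_without i #> word_eval G g v"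
  obtains p where "letters p \<subseteq> I - {i}" "reduced_word (p @ v)" "y = word_eval G g (p @ v)"
proof -
  obtain h where h: "h \<in> G_without i" "y = h \<otimes> word_eval G g v"
    using y unfolding r_coset_def by auto
  obtain p where p: "reduced_word p" "letters p \<subseteq> I - {i}" "h = word_eval G g p"
    using generate_reduced_word[OF _ h(1)] by blast
  have "snd (last p) \<in> letters p" if "p \<noteq> []"
    using that by simp
  then have "p \<noteq> [] \<Longrightarrow> snd (last p) \<noteq> i"
    using p(2) by blast
  then have "reduced_word (p @ v)"
    using p(1) v by (auto simp: coset_normal_word_def reduced_word_append)
  moreover have "letters p \<subseteq> I"
    using p(2) by blast
  then have "y = word_eval G g (p @ v)"
    unfolding h(2) p(3) using v by (simp add: coset_normal_word_def word_eval_append)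
  ultimately show thesis
    using that p(2) by blast
qed

end

section \<open>Independent families\<close>

locale free_generator_family = generator_family +
  assumes independent: "independent_family G g I"
begin

lemma word_eval_neq_one:
  "reduced_word w \<Longrightarrow> letters w \<subseteq> I \<Longrightarrow> w \<noteq> [] \<Longrightarrow> word_eval G g w \<noteq> \<one>"
  using independent unfolding independent_family_def by auto

lemma reduced_word_eval_inj:
  assumes "reduced_word w1" "reduced_word w2" "letters w1 \<subseteq> I" "letters w2 \<subseteq> I"
    and "word_eval G g w1 = word_eval G g w2"
  shows "w1 = w2"
  using assms
proof (induction w1 arbitrary: w2)
  case Nil
  then show ?case
    using word_eval_neq_one[of w2] by auto
next
  case (Cons x w1)
  show ?case
  proof (cases w2)
    case Nil
    then show ?thesis
      using Cons.prems word_eval_neq_one[of "x # w1"] by auto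
  next
    case (Cons y w2')
    obtain b i where x: "x = (b, i)" by fastforce
    obtain c j where y: "y = (c, j)" by fastforce
    have closed: "g i \<in> carrier G" "word_eval G g w1 \<in> carrier G" "word_eval G g w2' \<in> carrier G"
      using Cons.prems Cons x generators_closed by (auto intro!: word_eval_closed)
    show ?thesis
    proof (cases "x = y")
      case True
      then have "word_eval G g (x # w1) = word_eval G g (x # w2')"
        using Cons.prems(5) Cons by simp
      then have "word_eval G g w1 = word_eval G g w2'"
        using closed by (cases b) (simp_all add: x)
      then have "w1 = w2'"
        using Cons.IH[of w2'] Cons.prems Cons by (auto dest: reduced_word_ConsD)
      then show ?thesis
        using Cons True by simp
    next
      case False
      \<comment> \<open>Different first letters: w2\<inverse> w1 is reduced yet trivial.\<close>
      have "last (inv_word w2) = (\<not> c, j)" "inv_word w2 \<noteq> []"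
        using Cons y by (simp_all add: inv_word_def)
      then have "reduced_word (inv_word w2 @ x # w1)"
        using Cons.prems(1,2) False x y
        by (auto simp: reduced_word_append reduced_word_inv_word)
      moreover have "word_eval G g (inv_word w2 @ x # w1) = \<one>"
        using Cons.prems word_eval_closed[of w2]
        by (simp add: word_eval_append word_eval_inv_word)
      ultimately show ?thesis
        using Cons.prems(3,4) word_eval_neq_one[of "inv_word w2 @ x # w1"] by (simp add: image_Un)
    qed
  qed
qed

lemma longer_normal_word_in_meeting_coset:
  assumes v: "coset_normal_word i v" and w: "coset_normal_word k w"
    and "length v \<le> length w"
    and meet: "y \<in> G_without i #> word_eval G g v" "y \<in> G_without k #> word_eval G g w"
  shows "word_eval G g w \<in> G_without i #> word_eval G g v"
proof -
  obtain p where p: "letters p \<subseteq> I - {i}" "reduced_word (p @ v)" "y = word_eval G g (p @ v)"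
    using mem_coset_normal_word[OF v meet(1)] .
  obtain q where q: "letters q \<subseteq> I - {k}" "reduced_word (q @ w)" "y = word_eval G g (q @ w)"
    using mem_coset_normal_word[OF w meet(2)] .
  have "p @ v = q @ w"
    using p q v w by (intro reduced_word_eval_inj) (auto simp: coset_normal_word_def)
  then obtain u where u: "w = u @ v" "p = q @ u"
    using \<open>length v \<le> length w\<close> by (auto simp: append_eq_append_conv2)
  then have "letters u \<subseteq> I - {i}"
    using p(1) by auto
  then have "word_eval G g u \<in> G_without i"
    by (intro word_eval_in_generate) auto
  moreover have "word_eval G g w = word_eval G g u \<otimes> word_eval G g v"
    unfolding u(1) using \<open>letters u \<subseteq> I - {i}\<close> v
    by (intro word_eval_append) (auto simp: coset_normal_word_def)
  ultimately show ?thesis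
    unfolding r_coset_def by blast
qed

lemma coset_flag_common_element:
  assumes "finite I" and flag: "coset_flag (G\<lparr>carrier := generate G (g ` I)\<rparr>) G_without I Fl"
  shows "\<exists>b\<in>generate G (g ` I). \<forall>x\<in>Fl. b \<in> snd x"
proof -
  have elements: "Fl \<subseteq> coset_elements (G\<lparr>carrier := generate G (g ` I)\<rparr>) G_without I"
    using flag by (simp add: coset_flag_def)
  have "\<exists>v. coset_normal_word (fst x) v \<and> snd x = G_without (fst x) #> word_eval G g v"
    if "x \<in> Fl" for x
    by (rule coset_element_normal_word[OF subsetD[OF elements that]]) blast
  then obtain V where V: "\<And>x. x \<in> Fl \<Longrightarrow> coset_normal_word (fst x) (V x)"
    "\<And>x. x \<in> Fl \<Longrightarrow> snd x = G_without (fst x) #> word_eval G g (V x)"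
    by metis
  show ?thesis
  proof (cases "Fl = {}")
    case True
    then show ?thesis
      using generate.one by blast
  next
    case False
    define M where "M = Max ((\<lambda>x. length (V x)) ` Fl)"
    have "finite Fl"
      using finite_coset_flag[OF assms] .
    then have "M \<in> (\<lambda>x. length (V x)) ` Fl" "\<And>x. x \<in> Fl \<Longrightarrow> length (V x) \<le> M"
      using False by (simp_all add: M_def)
    then obtain m where m: "m \<in> Fl" "\<And>x. x \<in> Fl \<Longrightarrow> length (V x) \<le> length (V m)"
      by auto
    have Vm: "word_eval G g (V m) \<in> carrier G"
      using V(1)[OF m(1)] by (intro word_eval_closed) (simp add: coset_normal_word_def)
    have "word_eval G g (V m) \<in> snd x" if x: "x \<in> Fl" for x
    proof (cases "x = m")
      case True
      then show ?thesis
        using V(2)[OF m(1)] rcos_self[OF Vm subgroup_generate[of "I - {fst m}"]] by auto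
    next
      case False
      then have "snd x \<inter> snd m \<noteq> {}"
        using flag x m(1) by (simp add: coset_flag_def coset_incident_def)
      then obtain y where "y \<in> snd x" "y \<in> snd m"
        by blast
      then show ?thesis
        using longer_normal_word_in_meeting_coset[OF V(1)[OF x] V(1)[OF m(1)] m(2)[OF x]]
          V(2)[OF x] V(2)[OF m(1)] by simp
    qed
    moreover have "word_eval G g (V m) \<in> generate G (g ` I)"
      using V(1)[OF m(1)] by (intro word_eval_in_generate) (auto simp: coset_normal_word_def)
    ultimately show ?thesis
      by blast
  qed
qed

end

theorem mainTheorem7:
  fixes F :: "('a,'b) monoid_scheme" and n :: nat and I :: "'i set" and g :: "'i \<Rightarrow> 'a"
  assumes "free_group_of_rank F n"
    and "finite I"
    and "g ` I \<subseteq> carrier F"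
    and "inj_on g I"
    and "independent_family F g I"
  shows "flag_transitive (F\<lparr>carrier := generate F (g ` I)\<rparr>)
           (\<lambda>i. generate F (g ` (I - {i}))) I"
proof -
  have "group F"
    using assms(1) by (simp add: free_group_of_rank_def)
  then interpret free_generator_family F g I
    using assms(3,5)
    by (simp add: free_generator_family_def free_generator_family_axioms_def
        generator_family_def generator_family_axioms_def)
  have "subgroup (generate F (g ` I)) F"
    by (rule subgroup_generate) simp
  then have "group (F\<lparr>carrier := generate F (g ` I)\<rparr>)"
    by (rule subgroup.subgroup_is_group) (rule is_group)
  then show ?thesis
  proof (rule group.flag_transitive_if_flags_meet)
    show "subgroup (G_without i) (F\<lparr>carrier := generate F (g ` I)\<rparr>)" if "i \<in> I" for i
      by (intro subgroup_incl subgroup_generate mono_generate) auto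
    show "\<exists>b\<in>carrier (F\<lparr>carrier := generate F (g ` I)\<rparr>). \<forall>x\<in>Fl. b \<in> snd x"
      if "coset_flag (F\<lparr>carrier := generate F (g ` I)\<rparr>) G_without I Fl" for Fl
      using coset_flag_common_element[OF assms(2) that] by simp
  qed
qed

end
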